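(* Let $I$ be a closed interval of positive length, and let $\alpha:I\to S^{k-1}\subseteq\mathbb{R}^k$, $\alpha(s)=(\alpha_1(s),\dots,\alpha_k(s))$, be a continuous, nonconstant path. Define $D_\alpha:I\to\mathbb{Z}$ by $D_\alpha(s)=\dim_{\mathbb{Q}}\{\beta\in\mathbb{Q}^k:\beta\cdot\alpha(s)=0\}$. Then $D_\alpha$ is not constant. *)

theory Defs
  imports "HOL-Analysis.Analysis"
begin

definition rat_orth_dim :: "('k::finite \<Rightarrow> real) \<Rightarrow> int" where
  "rat_orth_dim x = int (vec.dim {\<beta> :: rat^'k. (\<Sum>i\<in>UNIV. of_rat (\<beta> $ i) * x i) = 0})"

definition D_alpha :: "(real \<Rightarrow> real^'k::finite) \<Rightarrow> real \<Rightarrow> int" where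
  "D_alpha \<alpha> s = rat_orth_dim (\<lambda>i. \<alpha> s $ i)"

end

theory Submission
  imports Defs
begin

text \<open>If \<open>D\<^sub>\<alpha>\<close> were constant, the subspaces \<open>V(s) = {\<beta> \<in> \<rat>\<^sup>k. \<beta> \<cdot> \<alpha>(s) = 0}\<close> would all
  have the same dimension, so for each \<open>s\<close> the closed set \<open>{u. V(s) \<subseteq> V(u)}\<close> is exactly the
  set where \<open>V(u) = V(s)\<close>. There are only countably many subspaces of \<open>\<rat>\<^sup>k\<close>, so these
  closed sets partition the interval into countably many nonempty closed pieces, and by
  Sierpinski's theorem there is only one: \<open>V\<close> is constant. But if \<open>\<alpha>(s) \<noteq> \<alpha>(t)\<close>, a rational
  approximation \<open>\<beta>\<close> of \<open>\<alpha>(s) - \<alpha>(t)\<close> satisfies \<open>\<beta> \<cdot> \<alpha>(s) > 0 > \<beta> \<cdot> \<alpha>(t)\<close>, so \<open>\<beta> \<cdot> \<alpha>\<close>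
  vanishes somewhere, i.e. \<open>\<beta>\<close> lies in some \<open>V(u)\<close> but not in \<open>V(s)\<close>.\<close>

definition rat_pairing :: "rat^'k::finite \<Rightarrow> ('k \<Rightarrow> real) \<Rightarrow> real" where
  "rat_pairing \<beta> x = (\<Sum>i\<in>UNIV. of_rat (\<beta> $ i) * x i)"

definition rat_orth :: "('k::finite \<Rightarrow> real) \<Rightarrow> (rat^'k) set" where
  "rat_orth x = {\<beta>. rat_pairing \<beta> x = 0}"

lemma rat_orth_dim_eq: "rat_orth_dim x = int (vec.dim (rat_orth x))"
  by (simp add: rat_orth_dim_def rat_orth_def rat_pairing_def)

lemma subspace_rat_orth: "vec.subspace (rat_orth x)"
  unfolding vec.subspace_def rat_orth_def rat_pairing_def
  by (simp add: of_rat_add of_rat_mult distrib_right sum.distrib mult.assoc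
      flip: sum_distrib_left)

lemma continuous_on_rat_pairing:
  fixes \<alpha> :: "'a::topological_space \<Rightarrow> real^'k::finite"
  assumes "continuous_on S \<alpha>"
  shows "continuous_on S (\<lambda>u. rat_pairing \<beta> (($) (\<alpha> u)))"
  unfolding rat_pairing_def using assms by (intro continuous_intros) auto

lemma closed_superset_rat_orth:
  fixes \<alpha> :: "real \<Rightarrow> real^'k::finite"
  assumes "continuous_on S \<alpha>" "closed S"
  shows "closed {u \<in> S. W \<subseteq> rat_orth (($) (\<alpha> u))}"
proof -
  have "{u \<in> S. W \<subseteq> rat_orth (($) (\<alpha> u))}
      = S \<inter> (\<Inter>\<beta>\<in>W. {u \<in> S. rat_pairing \<beta> (($) (\<alpha> u)) = 0})"
    unfolding rat_orth_def by auto
  moreover have "closed {u \<in> S. rat_pairing \<beta> (($) (\<alpha> u)) = 0}" for \<beta>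
    by (rule continuous_closed_preimage_constant)
      (use continuous_on_rat_pairing[OF assms(1)] assms(2) in auto)
  ultimately show ?thesis
    using assms(2) by (simp add: closed_INT closed_Int)
qed

lemma countable_subspaces_vec:
  "countable {W :: ('a::{field,countable}^'n::finite) set. vec.subspace W}"
proof -
  have "{W :: ('a^'n) set. vec.subspace W} \<subseteq> vec.span ` {B. finite B}"
  proof
    fix W :: "('a^'n) set"
    assume "W \<in> {W. vec.subspace W}"
    then have "vec.subspace W" by simp
    obtain B where "B \<subseteq> W" "vec.independent B" "W \<subseteq> vec.span B"
      by (rule vec.basis_exists)
    then have "W = vec.span B" "finite B"
      using vec.span_minimal[OF \<open>B \<subseteq> W\<close> \<open>vec.subspace W\<close>] vec.finiteI_independent by auto
    then show "W \<in> vec.span ` {B. finite B}" by blast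
  qed
  moreover have "countable (vec.span ` {B :: ('a^'n) set. finite B})"
    using countable_Collect_finite by blast
  ultimately show ?thesis by (rule countable_subset)
qed

lemma constant_if_countable_closed_fibres:
  fixes f :: "real \<Rightarrow> 'b"
  assumes "countable (f ` {a..b})"
    and "\<And>y. closed {u \<in> {a..b}. f u = y}"
    and "s \<in> {a..b}" "t \<in> {a..b}"
  shows "f s = f t"
proof -
  define fibre where "fibre y = {u \<in> {a..b}. f u = y}" for y
  have "fibre ` f ` {a..b} = {{a..b}}"
  proof (rule real_Sierpinski_lemma)
    show "a \<le> b" using \<open>s \<in> {a..b}\<close> by simp
    show "countable (fibre ` f ` {a..b})" using assms(1) by simp
    show "pairwise disjnt (fibre ` f ` {a..b})"
      unfolding pairwise_def disjnt_def fibre_def by auto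
    show "closed C \<and> C \<noteq> {}" if "C \<in> fibre ` f ` {a..b}" for C
      using that assms(2) unfolding fibre_def by auto
    show "\<Union> (fibre ` f ` {a..b}) = {a..b}"
      unfolding fibre_def by auto
  qed
  then have "fibre (f s) = {a..b}" using assms(3) by blast
  then have "t \<in> fibre (f s)" using assms(4) by simp
  then show ?thesis unfolding fibre_def by simp
qed

lemma subspace_family_constant:
  fixes V :: "real \<Rightarrow> ('a::{field,countable}^'n::finite) set"
  assumes subspace: "\<And>u. u \<in> {a..b} \<Longrightarrow> vec.subspace (V u)"
    and dim: "\<And>u w. u \<in> {a..b} \<Longrightarrow> w \<in> {a..b} \<Longrightarrow> vec.dim (V u) = vec.dim (V w)"
    and closed: "\<And>W. closed {u \<in> {a..b}. W \<subseteq> V u}"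
    and "s \<in> {a..b}" "t \<in> {a..b}"
  shows "V s = V t"
proof (rule constant_if_countable_closed_fibres[of V a b])
  show "countable (V ` {a..b})"
    by (rule countable_subset[OF _ countable_subspaces_vec]) (auto simp: subspace)
  show "closed {u \<in> {a..b}. V u = W}" for W
  proof (cases "\<exists>w\<in>{a..b}. V w = W")
    case True
    then obtain w where w: "w \<in> {a..b}" "V w = W" by blast
    have "V u = W \<longleftrightarrow> W \<subseteq> V u" if "u \<in> {a..b}" for u
      using vec.subspace_dim_equal[OF subspace[OF w(1)] subspace[OF that]] dim[OF that w(1)] w(2)
      by auto
    then have "{u \<in> {a..b}. V u = W} = {u \<in> {a..b}. W \<subseteq> V u}" by blast
    then show ?thesis using closed by simp
  next
    case False
    then have "{u \<in> {a..b}. V u = W} = {}" by blast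
    then show ?thesis by (simp only: closed_empty)
  qed
qed (use assms in auto)

lemma inner_diff_same_norm:
  fixes x y :: "'a::real_inner"
  assumes "norm x = norm y" "x \<noteq> y"
  shows "inner (x - y) x > 0" "inner (x - y) y < 0"
proof -
  have "inner (x - y) (x - y) > 0" using assms(2) by simp
  moreover have "inner x x = inner y y" using assms(1) by (simp add: dot_square_norm)
  ultimately show "inner (x - y) x > 0" "inner (x - y) y < 0"
    by (auto simp: inner_diff inner_commute)
qed

lemma rat_pairing_approx:
  fixes v :: "real^'k::finite"
  assumes "e > 0"
  obtains \<beta> :: "rat^'k" where "\<And>z. \<bar>rat_pairing \<beta> (($) z) - inner v z\<bar> \<le> e * norm z"
proof -
  define d where "d = e / real CARD('k)"
  have "d > 0" using assms by (simp add: d_def)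
  have "\<exists>q::rat. \<bar>of_rat q - v $ i\<bar> < d" for i
  proof -
    obtain q where "v $ i - d < of_rat q" "of_rat q < v $ i + d"
      using of_rat_dense[of "v $ i - d" "v $ i + d"] \<open>d > 0\<close> by auto
    then show ?thesis by (intro exI[of _ q]) linarith
  qed
  then obtain q where q: "\<And>i. \<bar>of_rat (q i) - v $ i\<bar> < d" by metis
  have "\<bar>rat_pairing (\<chi> i. q i) (($) z) - inner v z\<bar> \<le> e * norm z" for z
  proof -
    have "\<bar>rat_pairing (\<chi> i. q i) (($) z) - inner v z\<bar> = \<bar>\<Sum>i\<in>UNIV. (of_rat (q i) - v $ i) * z $ i\<bar>"
      by (simp add: rat_pairing_def inner_vec_def sum_subtractf left_diff_distrib)
    also have "\<dots> \<le> (\<Sum>i\<in>UNIV. \<bar>(of_rat (q i) - v $ i) * z $ i\<bar>)"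
      by (rule sum_abs)
    also have "\<dots> \<le> (\<Sum>i\<in>(UNIV::'k set). d * norm z)"
    proof (rule sum_mono)
      fix i
      have "\<bar>of_rat (q i) - v $ i\<bar> * \<bar>z $ i\<bar> \<le> d * norm z"
        using q[of i] component_le_norm_cart[of z i] by (intro mult_mono) auto
      then show "\<bar>(of_rat (q i) - v $ i) * z $ i\<bar> \<le> d * norm z"
        by (simp add: abs_mult)
    qed
    also have "\<dots> = e * norm z" by (simp add: d_def)
    finally show ?thesis .
  qed
  then show ?thesis by (rule that)
qed

lemma rat_pairing_sign_change:
  fixes v x y :: "real^'k::finite"
  assumes "inner v x > 0" "inner v y < 0"
  obtains \<beta> :: "rat^'k" where "rat_pairing \<beta> (($) x) > 0" "rat_pairing \<beta> (($) y) < 0"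
proof -
  define e where "e = min (inner v x) (- inner v y) / (1 + norm x + norm y)"
  have "e > 0" using assms by (simp add: e_def add_pos_nonneg)
  have "e * norm x < inner v x" "e * norm y < - inner v y"
  proof -
    have "e * norm x \<le> e * (1 + norm x + norm y) - e" "e * norm y \<le> e * (1 + norm x + norm y) - e"
      using \<open>e > 0\<close> by (simp_all add: algebra_simps)
    moreover have "1 + norm x + norm y \<noteq> 0"
      using norm_ge_zero[of x] norm_ge_zero[of y] by linarith
    then have "e * (1 + norm x + norm y) = min (inner v x) (- inner v y)"
      unfolding e_def by simp
    ultimately show "e * norm x < inner v x" "e * norm y < - inner v y"
      using \<open>e > 0\<close> by linarith+
  qed
  moreover obtain \<beta> where approx: "\<And>z. \<bar>rat_pairing \<beta> (($) z) - inner v z\<bar> \<le> e * norm z"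
    using rat_pairing_approx \<open>e > 0\<close> by blast
  ultimately show ?thesis
    using approx[of x] approx[of y] unfolding abs_le_iff by (intro that[of \<beta>]) linarith+
qed

theorem mainTheorem7:
  fixes a b :: real and \<alpha> :: "real \<Rightarrow> real^'k::finite"
  assumes "a < b"
    and "continuous_on {a..b} \<alpha>"
    and "\<alpha> ` {a..b} \<subseteq> sphere 0 1"
    and "\<exists>s\<in>{a..b}. \<exists>t\<in>{a..b}. \<alpha> s \<noteq> \<alpha> t"
  shows "\<not> (\<exists>c. \<forall>s\<in>{a..b}. D_alpha \<alpha> s = c)"
proof
  assume "\<exists>c. \<forall>s\<in>{a..b}. D_alpha \<alpha> s = c"
  then obtain c where "\<And>s. s \<in> {a..b} \<Longrightarrow> D_alpha \<alpha> s = c" by blast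
  then have dim: "vec.dim (rat_orth (($) (\<alpha> u))) = vec.dim (rat_orth (($) (\<alpha> w)))"
    if "u \<in> {a..b}" "w \<in> {a..b}" for u w
    using that by (metis D_alpha_def rat_orth_dim_eq of_nat_eq_iff)
  obtain s t where st: "s \<in> {a..b}" "t \<in> {a..b}" "\<alpha> s \<noteq> \<alpha> t" using assms(4) by blast
  then have "norm (\<alpha> s) = norm (\<alpha> t)" using assms(3) by (simp add: image_subset_iff)
  then obtain \<beta> where \<beta>: "rat_pairing \<beta> (($) (\<alpha> s)) > 0" "rat_pairing \<beta> (($) (\<alpha> t)) < 0"
    using rat_pairing_sign_change inner_diff_same_norm[OF _ st(3)] by blast
  define g where "g u = rat_pairing \<beta> (($) (\<alpha> u))" for u
  have "connected (g ` {a..b})"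
    unfolding g_def by (intro connected_continuous_image continuous_on_rat_pairing assms(2)) simp
  then have "0 \<in> g ` {a..b}"
    using connected_ivt_hyperplane[of "g ` {a..b}" "g t" "g s" 1 0] st \<beta>
    unfolding g_def by auto
  then obtain u where u: "u \<in> {a..b}" "\<beta> \<in> rat_orth (($) (\<alpha> u))"
    unfolding g_def rat_orth_def by auto
  have "rat_orth (($) (\<alpha> u)) = rat_orth (($) (\<alpha> s))"
    by (rule subspace_family_constant[OF subspace_rat_orth dim
          closed_superset_rat_orth[OF assms(2) closed_atLeastAtMost] u(1) st(1)])
  then show False using u(2) \<beta>(1) by (simp add: rat_orth_def)
qed

end
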